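(* Let $M\in\mathbb R^{n\times n}$ be a sufficient matrix and let $B_1,B_2$ be complementary bases that are adjacent, i.e. $\dim\big(\mathcal C(B_1)\cap\mathcal C(B_2)\big)=n-1$. Then $|B_1\cap B_2|\ge n-2$.
   Context: Let $M\in\mathbb R^{n\times n}$ and $A=[\,I\;\;-M\,]\in\mathbb R^{n\times 2n}$, with columns indexed by $\{1,\dots,2n\}$; for $J\subseteq\{1,\dots,2n\}$, $A_{\cdot J}$ denotes the submatrix of columns indexed by $J$. For $i\in\{1,\dots,2n\}$ the complementary index is $\bar i=i+n$ if $i\le n$ and $\bar i=i-n$ if $i>n$. A set $J$ is complementary if $i\in J$ implies $\bar i\notin J$. A complementary basis is a complementary set $B$ with $|B|=n$ and $A_{\cdot B}$ invertible. For a complementary set $J$, the complementary cone is $\mathcal C(J)=\{A_{\cdot J}\lambda:\lambda\ge 0\}$. The dimension of a convex set is the dimension of its affine hull. $M$ is column sufficient if $[z_i(Mz)_i\le 0\ \forall i]\Rightarrow[z_i(Mz)_i=0\ \forall i]$; row sufficient if $M^T$ is column sufficient; sufficient if both. *)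

theory Defs
  imports "HOL-Analysis.Analysis"
begin

text \<open>Columns of A = [I, -M] are indexed by the sum type 'n + 'n:
  Inl i is column i of I (paper index i), Inr i is column i of -M (paper index i+n).
  The complement of Inl i is Inr i and vice versa.\<close>

fun colA :: "real^'n^'n \<Rightarrow> ('n + 'n) \<Rightarrow> real^'n" where
  "colA M (Inl i) = axis i 1"
| "colA M (Inr i) = - column i M"

fun cidx :: "('n + 'n) \<Rightarrow> ('n + 'n)" where
  "cidx (Inl i) = Inr i"
| "cidx (Inr i) = Inl i"

definition complementary :: "('n + 'n) set \<Rightarrow> bool" where
  "complementary J \<longleftrightarrow> (\<forall>i\<in>J. cidx i \<notin> J)"

text \<open>A_{.B} (an n x n matrix whose columns are colA M j, j in B) is invertible.\<close>
definition complementary_basis :: "real^'n^'n \<Rightarrow> ('n + 'n) set \<Rightarrow> bool" where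
  "complementary_basis M B \<longleftrightarrow> complementary B \<and> card B = CARD('n) \<and>
     inj_on (colA M) B \<and> independent (colA M ` B)"

definition ccone :: "real^'n^'n \<Rightarrow> ('n + 'n) set \<Rightarrow> (real^'n) set" where
  "ccone M J = {(\<Sum>j\<in>J. l j *\<^sub>R colA M j) | l. \<forall>j\<in>J. 0 \<le> l j}"

definition column_sufficient :: "real^'n^'n \<Rightarrow> bool" where
  "column_sufficient M \<longleftrightarrow>
     (\<forall>z. (\<forall>i. z $ i * (M *v z) $ i \<le> 0) \<longrightarrow> (\<forall>i. z $ i * (M *v z) $ i = 0))"

definition row_sufficient :: "real^'n^'n \<Rightarrow> bool" where
  "row_sufficient M \<longleftrightarrow> column_sufficient (transpose M)"

definition sufficient :: "real^'n^'n \<Rightarrow> bool" where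
  "sufficient M \<longleftrightarrow> column_sufficient M \<and> row_sufficient M"

end

theory Submission
  imports Defs
begin

text \<open>
  Write every point x of a complementary cone C(B) by its nonnegative
  coordinates in the basis A_B.  Splitting such a representation into its I-part w and
  its (-M)-part z gives x = w - M z.  If x lies in two complementary cones C(B1), C(B2),
  subtracting the two representations yields d with d_i (M d)_i \<le> 0 for all i, so column
  sufficiency forces d_i (M d)_i = 0, i.e. for j \<in> B1 with complement in B2 the
  j-th B1-coordinate and the complementary B2-coordinate of x have product 0.  By
  additivity of coordinates this holds even for two different points x, y of
  K = C(B1) \<inter> C(B2).  Hence each j \<in> B1 - B2 has either its B1-coordinate vanishing
  on all of K, or its complementary B2-coordinate vanishing on all of K.  Coordinates
  vanishing on K confine K to a span of fewer basis columns, so if K has dimension n-1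
  at most one index falls in each class; thus |B1 - B2| \<le> 2.
\<close>

lemma cidx_cidx [simp]: "cidx (cidx j) = j"
  by (cases j) auto

lemma inj_cidx: "inj cidx"
  by (metis cidx_cidx injI)

text \<open>A complementary basis contains exactly one of each complementary pair; we need that
  it meets every pair, so that an index of B1 missing from B2 has its complement in B2.\<close>
lemma complementary_basis_meets_pair:
  fixes M :: "real^'n^'n"
  assumes cb: "complementary_basis M B"
  shows "Inl i \<in> B \<or> Inr i \<in> B"
proof (rule ccontr)
  assume miss: "\<not> (Inl i \<in> B \<or> Inr i \<in> B)"
  have comp: "complementary B" and cardB: "card B = CARD('n)"
    using cb unfolding complementary_basis_def by auto
  define f :: "'n + 'n \<Rightarrow> 'n" where "f = case_sum id id"
  have "inj_on f B"
  proof (rule inj_onI)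
    fix x y assume "x \<in> B" "y \<in> B" "f x = f y"
    then show "x = y"
      using comp unfolding complementary_def f_def by (cases x; cases y) force+
  qed
  moreover have "f ` B \<subseteq> UNIV - {i}"
    using miss unfolding f_def by (auto split: sum.splits)
  ultimately have "card B \<le> card (UNIV - {i} :: 'n set)"
    by (meson card_inj_on_le finite)
  also have "\<dots> < CARD('n)" by (simp add: card_Diff_singleton)
  finally show False using cardB by simp
qed

lemma basis_coefficients_unique:
  fixes M :: "real^'n^'n"
  assumes inj: "inj_on (colA M) B" and ind: "independent (colA M ` B)"
    and eq: "(\<Sum>j\<in>B. a j *\<^sub>R colA M j) = (\<Sum>j\<in>B. b j *\<^sub>R colA M j)"
    and j: "j \<in> B"
  shows "a j = b j"
proof -
  define c where "c v = a (inv_into B (colA M) v) - b (inv_into B (colA M) v)" for v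
  have "(\<Sum>v\<in>colA M ` B. c v *\<^sub>R v) = (\<Sum>j\<in>B. (a j - b j) *\<^sub>R colA M j)"
    using inj by (simp add: sum.reindex c_def inv_into_f_f)
  also have "\<dots> = 0"
    using eq by (simp add: scaleR_diff_left sum_subtractf)
  finally have "\<forall>v\<in>colA M ` B. c v = 0"
    using ind real_vector.dependent_finite[of "colA M ` B"] by auto
  then show ?thesis using inj j by (simp add: c_def inv_into_f_f)
qed

definition ipart :: "('n + 'n) set \<Rightarrow> ('n + 'n \<Rightarrow> real) \<Rightarrow> real^'n" where
  "ipart B l = (\<chi> i. if Inl i \<in> B then l (Inl i) else 0)"

definition mpart :: "('n + 'n) set \<Rightarrow> ('n + 'n \<Rightarrow> real) \<Rightarrow> real^'n" where
  "mpart B l = (\<chi> i. if Inr i \<in> B then l (Inr i) else 0)"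

lemma combination_ipart_mpart:
  fixes M :: "real^'n^'n"
  shows "(\<Sum>j\<in>B. l j *\<^sub>R colA M j) = ipart B l - M *v mpart B l"
proof -
  define g where "g j = (if j \<in> B then l j else 0)" for j
  have "(\<Sum>j\<in>B. l j *\<^sub>R colA M j) = (\<Sum>j\<in>UNIV <+> UNIV. g j *\<^sub>R colA M j)"
    by (rule sum.mono_neutral_cong_left) (auto simp: g_def)
  also have "\<dots> = (\<Sum>i\<in>UNIV. g (Inl i) *\<^sub>R axis i 1) - (\<Sum>i\<in>UNIV. g (Inr i) *\<^sub>R column i M)"
    by (subst sum.Plus) (auto simp: o_def sum_negf)
  also have "(\<Sum>i\<in>UNIV. g (Inl i) *\<^sub>R axis i (1::real)) = ipart B l"
    using basis_expansion[of "ipart B l"] by (simp add: ipart_def g_def scalar_mult_eq_scaleR)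
  also have "(\<Sum>i\<in>UNIV. g (Inr i) *\<^sub>R column i M) = M *v mpart B l"
    by (simp add: vec_eq_iff mpart_def g_def column_def matrix_vector_mult_def mult.commute)
  finally show ?thesis .
qed


text \<open>If one point is a nonnegative combination over two complementary sets B1 and B2,
  the coefficient of j \<in> B1 and that of its complement in B2 cannot both be positive:
  the difference d of the (-M)-parts satisfies d_i (M d)_i \<le> 0 componentwise.\<close>
lemma column_sufficient_complementarity:
  fixes M :: "real^'n^'n"
  assumes cs: "column_sufficient M"
    and c1: "complementary B1" and c2: "complementary B2"
    and p1: "\<forall>j\<in>B1. 0 \<le> l1 j" and p2: "\<forall>j\<in>B2. 0 \<le> l2 j"
    and eq: "(\<Sum>j\<in>B1. l1 j *\<^sub>R colA M j) = (\<Sum>j\<in>B2. l2 j *\<^sub>R colA M j)"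
    and j1: "j \<in> B1" and j2: "cidx j \<in> B2"
  shows "l1 j * l2 (cidx j) = 0"
proof -
  define d where "d = mpart B1 l1 - mpart B2 l2"
  have Md: "M *v d = ipart B1 l1 - ipart B2 l2"
    using eq unfolding combination_ipart_mpart d_def
    by (simp add: matrix_vector_mult_diff_distrib algebra_simps)
  have pair1: "\<not> (Inl i \<in> B1 \<and> Inr i \<in> B1)" and pair2: "\<not> (Inl i \<in> B2 \<and> Inr i \<in> B2)" for i
    using c1 c2 unfolding complementary_def by force+
  have "d $ i * (M *v d) $ i \<le> 0" for i
    unfolding Md unfolding d_def using pair1[of i] pair2[of i] p1 p2
    by (cases "Inl i \<in> B1"; cases "Inr i \<in> B1"; cases "Inl i \<in> B2"; cases "Inr i \<in> B2")
       (auto simp: ipart_def mpart_def mult_nonneg_nonneg mult_nonneg_nonpos mult_nonpos_nonneg)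
  then have zero: "d $ i * (M *v d) $ i = 0" for i
    using cs unfolding column_sufficient_def by blast
  have "cidx j \<notin> B1" "j \<notin> B2"
    using c1 c2 j1 j2 cidx_cidx unfolding complementary_def by metis+
  then show ?thesis
    using zero[of "case_sum id id j"] j1 j2 unfolding Md unfolding d_def
    by (cases j) (auto simp: ipart_def mpart_def)
qed

text \<open>A choice of nonnegative coefficients representing x \<in> C(B); for a basis B they are
  unique, which makes them additive.\<close>
definition cone_coord :: "real^'n^'n \<Rightarrow> ('n + 'n) set \<Rightarrow> real^'n \<Rightarrow> ('n + 'n \<Rightarrow> real)" where
  "cone_coord M B x = (SOME l. (\<forall>j\<in>B. 0 \<le> l j) \<and> x = (\<Sum>j\<in>B. l j *\<^sub>R colA M j))"

lemma cone_coord: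
  assumes "x \<in> ccone M B"
  shows cone_coord_nonneg: "\<forall>j\<in>B. 0 \<le> cone_coord M B x j"
    and cone_coord_sum: "x = (\<Sum>j\<in>B. cone_coord M B x j *\<^sub>R colA M j)"
proof -
  have "\<exists>l. (\<forall>j\<in>B. 0 \<le> l j) \<and> x = (\<Sum>j\<in>B. l j *\<^sub>R colA M j)"
    using assms unfolding ccone_def by blast
  then have "(\<forall>j\<in>B. 0 \<le> cone_coord M B x j) \<and> x = (\<Sum>j\<in>B. cone_coord M B x j *\<^sub>R colA M j)"
    unfolding cone_coord_def by (rule someI_ex)
  then show "\<forall>j\<in>B. 0 \<le> cone_coord M B x j" "x = (\<Sum>j\<in>B. cone_coord M B x j *\<^sub>R colA M j)"
    by auto
qed

lemma ccone_add:
  assumes "x \<in> ccone M B" "y \<in> ccone M B"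
  shows "x + y \<in> ccone M B"
proof -
  let ?l = "\<lambda>j. cone_coord M B x j + cone_coord M B y j"
  have "x + y = (\<Sum>j\<in>B. ?l j *\<^sub>R colA M j)"
    using cone_coord_sum[OF assms(1)] cone_coord_sum[OF assms(2)]
    by (simp add: scaleR_add_left sum.distrib)
  moreover have "\<forall>j\<in>B. 0 \<le> ?l j"
    using cone_coord_nonneg[OF assms(1)] cone_coord_nonneg[OF assms(2)] by auto
  ultimately have "\<exists>l. x + y = (\<Sum>j\<in>B. l j *\<^sub>R colA M j) \<and> (\<forall>j\<in>B. 0 \<le> l j)"
    by (intro exI[of _ ?l] conjI)
  then show ?thesis unfolding ccone_def by (simp add: Setcompr_eq_image)
qed

lemma cone_coord_add:
  fixes M :: "real^'n^'n"
  assumes cb: "complementary_basis M B"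
    and x: "x \<in> ccone M B" and y: "y \<in> ccone M B" and j: "j \<in> B"
  shows "cone_coord M B (x + y) j = cone_coord M B x j + cone_coord M B y j"
proof (rule basis_coefficients_unique[OF _ _ _ j])
  show "inj_on (colA M) B" "independent (colA M ` B)"
    using cb unfolding complementary_basis_def by auto
  have "(\<Sum>j\<in>B. cone_coord M B (x + y) j *\<^sub>R colA M j) = x + y"
    using cone_coord_sum[OF ccone_add[OF x y]] by simp
  also have "\<dots> = (\<Sum>j\<in>B. (cone_coord M B x j + cone_coord M B y j) *\<^sub>R colA M j)"
    using cone_coord_sum[OF x] cone_coord_sum[OF y] by (simp add: scaleR_add_left sum.distrib)
  finally show "(\<Sum>j\<in>B. cone_coord M B (x + y) j *\<^sub>R colA M j) =
      (\<Sum>j\<in>B. (cone_coord M B x j + cone_coord M B y j) *\<^sub>R colA M j)" .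
qed

text \<open>The complementarity of column sufficiency holds across two different points of
  the intersection of the cones: apply it to x + y and expand by additivity.\<close>
lemma cone_coord_cross_complementarity:
  fixes M :: "real^'n^'n"
  assumes cs: "column_sufficient M"
    and cb1: "complementary_basis M B1" and cb2: "complementary_basis M B2"
    and x: "x \<in> ccone M B1 \<inter> ccone M B2" and y: "y \<in> ccone M B1 \<inter> ccone M B2"
    and j1: "j \<in> B1" and j2: "cidx j \<in> B2"
  shows "cone_coord M B1 x j * cone_coord M B2 y (cidx j) = 0"
proof -
  let ?a = "cone_coord M B1 x j" and ?b = "cone_coord M B1 y j"
  let ?c = "cone_coord M B2 x (cidx j)" and ?d = "cone_coord M B2 y (cidx j)"
  have xy: "x + y \<in> ccone M B1" "x + y \<in> ccone M B2"
    using x y ccone_add by blast+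
  have "cone_coord M B1 (x + y) j * cone_coord M B2 (x + y) (cidx j) = 0"
    using cb1 cb2 j1 j2 cone_coord_nonneg[OF xy(1)] cone_coord_nonneg[OF xy(2)]
      cone_coord_sum[OF xy(1), symmetric] cone_coord_sum[OF xy(2)]
    by (intro column_sufficient_complementarity[OF cs]) (auto simp: complementary_basis_def)
  then have "(?a + ?b) * (?c + ?d) = 0"
    using cone_coord_add[OF cb1 _ _ j1] cone_coord_add[OF cb2 _ _ j2] x y by auto
  moreover have "0 \<le> ?a" "0 \<le> ?b" "0 \<le> ?c" "0 \<le> ?d"
    using x y j1 j2 cone_coord_nonneg by blast+
  ultimately show ?thesis
    by (smt (verit) distrib_left distrib_right mult_nonneg_nonneg)
qed

text \<open>A subset of C(B) on which the coordinates indexed by T \<subseteq> B vanish lies in the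
  span of the |B| - |T| remaining columns.\<close>
lemma aff_dim_le_if_coords_vanish:
  fixes M :: "real^'n^'n"
  assumes K: "K \<subseteq> ccone M B" and T: "T \<subseteq> B" and fin: "finite B"
    and vanish: "\<forall>x\<in>K. \<forall>j\<in>T. cone_coord M B x j = 0"
  shows "aff_dim K \<le> int (card B) - int (card T)"
proof -
  have "K \<subseteq> span (colA M ` (B - T))"
  proof
    fix x assume "x \<in> K"
    then have "x = (\<Sum>j\<in>B. cone_coord M B x j *\<^sub>R colA M j)"
      using K cone_coord_sum by blast
    also have "\<dots> = (\<Sum>j\<in>B - T. cone_coord M B x j *\<^sub>R colA M j)"
      using \<open>x \<in> K\<close> vanish T by (intro sum.mono_neutral_right[OF fin]) auto
    also have "\<dots> \<in> span (colA M ` (B - T))"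
      by (intro span_sum span_scale span_base) auto
    finally show "x \<in> span (colA M ` (B - T))" .
  qed
  then have "aff_dim K \<le> aff_dim (span (colA M ` (B - T)))"
    by (rule aff_dim_subset)
  also have "\<dots> = int (dim (colA M ` (B - T)))"
    by (simp add: aff_dim_subspace)
  also have "dim (colA M ` (B - T)) \<le> card (B - T)"
    using fin dim_le_card' card_image_le
    by (metis finite_Diff finite_imageI order_trans)
  also have "card (B - T) = card B - card T"
    using T fin by (simp add: card_Diff_subset finite_subset)
  finally show ?thesis
    using card_mono[OF fin T] by linarith
qed


text \<open>Split B1 - B2 into the indices whose B1-coordinate vanishes on K = C(B1) \<inter> C(B2)
  and the rest; by cross complementarity the rest have their complementary B2-coordinate
  vanishing on K.  If K has dimension n - 1, each class has at most one element.\<close>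
lemma card_basis_difference_le_two:
  fixes M :: "real^'n^'n"
  assumes cs: "column_sufficient M"
    and cb1: "complementary_basis M B1" and cb2: "complementary_basis M B2"
    and adj: "aff_dim (ccone M B1 \<inter> ccone M B2) = int CARD('n) - 1"
  shows "card (B1 - B2) \<le> 2"
proof -
  define K where "K = ccone M B1 \<inter> ccone M B2"
  have n1: "card B1 = CARD('n)" and n2: "card B2 = CARD('n)"
    using cb1 cb2 unfolding complementary_basis_def by auto
  have compl_in_B2: "cidx j \<in> B2" if "j \<in> B1 - B2" for j
    using that complementary_basis_meets_pair[OF cb2] by (cases j) force+
  define T1 where "T1 = {j \<in> B1 - B2. \<forall>x\<in>K. cone_coord M B1 x j = 0}"
  define T2 where "T2 = (B1 - B2) - T1"
  have "aff_dim K \<le> int (card B1) - int (card T1)"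
    by (rule aff_dim_le_if_coords_vanish) (auto simp: K_def T1_def)
  then have card_T1: "card T1 \<le> 1"
    using adj n1 unfolding K_def by linarith
  have vanish2: "\<forall>y\<in>K. \<forall>j\<in>cidx ` T2. cone_coord M B2 y j = 0"
  proof (intro ballI)
    fix y j assume y: "y \<in> K" and "j \<in> cidx ` T2"
    then obtain i where i: "i \<in> T2" and j: "j = cidx i" by blast
    then obtain x where x: "x \<in> K" and "cone_coord M B1 x i \<noteq> 0"
      unfolding T2_def T1_def by auto
    moreover have "cone_coord M B1 x i * cone_coord M B2 y (cidx i) = 0"
      using i x y compl_in_B2 unfolding K_def T2_def
      by (intro cone_coord_cross_complementarity[OF cs cb1 cb2]) auto
    ultimately show "cone_coord M B2 y j = 0" using j by simp
  qed
  have "aff_dim K \<le> int (card B2) - int (card (cidx ` T2))"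
    by (rule aff_dim_le_if_coords_vanish[OF _ _ _ vanish2])
       (auto simp: K_def T2_def compl_in_B2)
  moreover have "card (cidx ` T2) = card T2"
    using inj_cidx by (metis card_image inj_on_subset subset_UNIV)
  ultimately have card_T2: "card T2 \<le> 1"
    using adj n2 unfolding K_def by linarith
  have "card T2 = card (B1 - B2) - card T1" and "card T1 \<le> card (B1 - B2)"
    unfolding T2_def T1_def by (auto intro: card_Diff_subset card_mono)
  with card_T1 card_T2 show ?thesis by linarith
qed

text \<open>Main theorem.\<close>
theorem mainTheorem1:
  fixes M :: "real^'n^'n" and B1 B2 :: "('n + 'n) set"
  assumes "sufficient M"
    and "complementary_basis M B1" and "complementary_basis M B2"
    and "aff_dim (ccone M B1 \<inter> ccone M B2) = int CARD('n) - 1"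
  shows "int (card (B1 \<inter> B2)) \<ge> int CARD('n) - 2"
proof -
  have "column_sufficient M"
    using assms(1) unfolding sufficient_def by simp
  then have "card (B1 - B2) \<le> 2"
    using card_basis_difference_le_two assms(2-4) by blast
  moreover have "card (B1 - B2) = card B1 - card (B1 \<inter> B2)"
    by (simp add: card_Diff_subset_Int)
  moreover have "card (B1 \<inter> B2) \<le> card B1"
    by (rule card_mono) auto
  moreover have "card B1 = CARD('n)"
    using assms(2) unfolding complementary_basis_def by simp
  ultimately show ?thesis by linarith
qed

end
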